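(* In the setting below, the vector $v=1\otimes e^0\in V^{\Lambda_0}$ is a highest weight vector for $Vir\otimes\tilde{\mathfrak a}$ of type $Vir(\tfrac45,0)\otimes W^{\Omega_0}$, i.e. it satisfies conditions (HW1)–(HW5) with $h=0$ and $\omega_j=0$.
   Context: Setting. $Q$ is the $E_6$ root lattice with simple roots $\alpha_1,\dots,\alpha_6$ (Dynkin chain $\alpha_1-\alpha_3-\alpha_4-\alpha_5-\alpha_6$, $\alpha_2$ attached to $\alpha_4$), form $\langle\cdot,\cdot\rangle$ from the Cartan matrix, fundamental weights $\lambda_i$, $P=\bigoplus\mathbb Z\lambda_i$, $\mathfrak h=\mathbb C\otimes P$. $\varepsilon:P\times P\to\{\pm1\}$ is bimultiplicative with $[\varepsilon(\lambda_i,\lambda_j)]$ rows $(1,1,1,1,1,1)$, $(-1,1,1,1,1,-1)$, $(-1,1,1,1,1,1)$, $(1,-1,1,1,1,1)$, $(1,1,1,1,1,-1)$, $(1,1,1,1,1,1)$. $V_P=S(\hat{\mathfrak h}^-)\otimes\mathbb C[P]$ with Heisenberg operators $h(n)$ ($[h(m),h'(n)]=m\langle h,h'\rangle\delta_{m+n,0}$, $h(n)1=0$ for $n>0$, $h(0)(u\otimes e^\beta)=\langle h,\beta\rangle u\otimes e^\beta$). For $\alpha\in Q$: $Y(1\otimes e^\alpha,z)=\exp(\sum_{k\ge1}\frac{\alpha(-k)}kz^k)\exp(-\sum_{k\ge1}\frac{\alpha(k)}kz^{-k})e_\alpha z^{\alpha(0)}=\sum_{n}\{1\otimes e^\alpha\}_nz^{-n-1}$,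 $e_\alpha(u\otimes e^\beta)=\varepsilon(\alpha,\beta)u\otimes e^{\alpha+\beta}$, $z^{\alpha(0)}(u\otimes e^\beta)=z^{\langle\alpha,\beta\rangle}u\otimes e^\beta$; $Y(h(-1)1\otimes e^0,z)=\sum_nh(n)z^{-n-1}$, and more generally $Y(h_1(-1)\cdots h_k(-1)\otimes e^\alpha,z)=\,:h_1(z)\cdots h_k(z)Y(1\otimes e^\alpha,z):$ (normal ordering: annihilation operators $h(n)$, $n>0$, to the right). $V^{\Lambda_0}=S(\hat{\mathfrak h}^-)\otimes\mathbb C[Q]$, $V^{\Lambda_1}$ and $V^{\Lambda_6}$ are the subspaces spanned by $S(\hat{\mathfrak h}^-)\otimes e^\nu$ with $\nu\in\lambda_1+Q$, resp. $\nu\in\lambda_6+Q$; these are the level one irreducible modules of the affine algebra of type $E_6^{(1)}$. $\tau$: $\alpha_1\leftrightarrow\alpha_6$, $\alpha_3\leftrightarrow\alpha_5$ ($\lambda_1\leftrightarrow\lambda_6$, $\lambda_3\leftrightarrow\lambda_5$); $\mathrm{Proj}(\nu)=(\nu+\tau\nu)/2$. $\theta=\alpha_1+2\alpha_2+2\alpha_3+3\alpha_4+2\alpha_5+\alpha_6$. The $F_4^{(1)}$ subalgebra $\tilde{\mathfrak a}$ has Chevalley-type raising operators $\{\beta_1\}_0=\{1\otimes e^{\alpha_2}\}_0$, $\{\beta_2\}_0=\{1\otimes e^{\alpha_4}\}_0$, $\{\beta_3\}_0=\{1\otimes e^{\alpha_3}\}_0+\{1\otimes e^{\alpha_5}\}_0$,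 $\{\beta_4\}_0=\{1\otimes e^{\alpha_1}\}_0+\{1\otimes e^{\alpha_6}\}_0$, and $\{1\otimes e^{-\theta}\}_1$. The coset conformal vector is $\omega=\frac1{10}[(-\lambda_1+\lambda_6)(-1)^2+(\lambda_3-\lambda_5)(-1)^2+(\lambda_1-\lambda_3+\lambda_5-\lambda_6)(-1)^2]\otimes e^0+\frac15(-1\otimes e^{\pm\gamma_1}-1\otimes e^{\pm\gamma_2}+1\otimes e^{\pm\gamma_3})$, where $\gamma_1=\alpha_1-\alpha_6$, $\gamma_2=\alpha_3-\alpha_5$, $\gamma_3=\gamma_1+\gamma_2$ and $1\otimes e^{\pm\gamma}$ means $1\otimes e^{\gamma}+1\otimes e^{-\gamma}$; $L(n)=\{\omega\}_{n+1}$ gives a Virasoro representation of central charge $4/5$ commuting with $\tilde{\mathfrak a}$. The $F_4$ fundamental weights are $\omega_1=\lambda_2,\omega_2=\lambda_4,\omega_3=\frac{\lambda_3+\lambda_5}2,\omega_4=\frac{\lambda_1+\lambda_6}2$; $\Omega_0,\Omega_4$ are the level one $F_4^{(1)}$ weights with finite parts $0,\omega_4$, and $W^{\Omega_j}$ the corresponding irreducible modules; $Vir(c,h)$ is the irreducible highest weight Virasoro module. A nonzero $v\in V_P$ is a highest weight vector of type $Vir(\frac45,h)\otimes W^{\Omega_j}$ if: (HW1) $\{1\otimes e^{-\theta}\}_1v=0$; (HW2) $\{\beta_i\}_0v=0$ for $i=1,\dots,4$; (HW3) $L(1)v=L(2)v=0$; (HW4) $L(0)v=hv$; (HW5) $v\in\bigoplus_kS(\hat{\mathfrak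 h}^-)\otimes e^{\nu_k}$ with $\mathrm{Proj}(\nu_k)=\omega_j$ for all $k$ (where $\omega_0:=0$). *)

theory Defs
  imports "HOL-Analysis.Analysis" "HOL-Library.Multiset" "HOL-Library.Function_Algebras"
begin

section \<open>E6 data (indices 1..6, Bourbaki labelling)\<close>

definition cartan :: "nat \<Rightarrow> nat \<Rightarrow> int" where
  "cartan i j = (if i = j then 2
     else if {i,j} \<in> {{1,3},{3,4},{4,5},{5,6},{2,4}} then -1 else 0)"

text \<open>Gram matrix of the fundamental weights: gram i j = <lambda_i, lambda_j>
  (the inverse of the Cartan matrix).\<close>
definition gram_row :: "nat \<Rightarrow> real list" where
  "gram_row i = (if i = 1 then [4,3,5,6,4,2]
     else if i = 2 then [3,6,6,9,6,3]
     else if i = 3 then [5,6,10,12,8,4]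
     else if i = 4 then [6,9,12,18,12,6]
     else if i = 5 then [4,6,8,12,10,5]
     else [2,3,4,6,5,4])"

definition gram :: "nat \<Rightarrow> nat \<Rightarrow> real" where
  "gram i j = (gram_row i ! (j - 1)) / 3"

text \<open>Weights (elements of P) are given by their integer coordinates w.r.t.
  lambda_1..lambda_6 (only the entries 1..6 are relevant); elements of
  h = C (x) P by their complex coordinates w.r.t. lambda_1..lambda_6.\<close>
type_synonym wt = "nat \<Rightarrow> int"
type_synonym hvec = "nat \<Rightarrow> complex"

definition lam :: "nat \<Rightarrow> wt" where
  "lam i = (\<lambda>j. if j = i then 1 else 0)"

definition alpha :: "nat \<Rightarrow> wt" where
  "alpha i = (\<lambda>j. if j \<in> {1..6} then cartan i j else 0)"

definition theta :: wt where
  "theta = (\<lambda>j. alpha 1 j + 2 * alpha 2 j + 2 * alpha 3 j + 3 * alpha 4 j + 2 * alpha 5 j + alpha 6 j)"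

definition hv :: "wt \<Rightarrow> hvec" where
  "hv \<mu> = (\<lambda>i. of_int (\<mu> i))"

definition form_h :: "hvec \<Rightarrow> hvec \<Rightarrow> complex" where
  "form_h h h' = (\<Sum>i\<in>{1..6}. \<Sum>j\<in>{1..6}. h i * of_real (gram i j) * h' j)"

definition form_w :: "wt \<Rightarrow> wt \<Rightarrow> real" where
  "form_w \<mu> \<nu> = (\<Sum>i\<in>{1..6}. \<Sum>j\<in>{1..6}. of_int (\<mu> i) * gram i j * of_int (\<nu> j))"

definition in_P :: "wt \<Rightarrow> bool" where
  "in_P \<nu> \<longleftrightarrow> (\<forall>i. i \<notin> {1..6} \<longrightarrow> \<nu> i = 0)"

definition in_Q :: "wt \<Rightarrow> bool" where
  "in_Q \<nu> \<longleftrightarrow> (\<exists>c :: nat \<Rightarrow> int. \<nu> = (\<lambda>j. \<Sum>i\<in>{1..6}. c i * alpha i j))"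

text \<open>The bimultiplicative cocycle: eps_mat i j = epsilon(lambda_i, lambda_j).\<close>
definition eps_mat :: "nat \<Rightarrow> nat \<Rightarrow> int" where
  "eps_mat i j = (if (i,j) \<in> {(2,1),(2,6),(3,1),(4,2),(5,6)} then -1 else 1)"

definition eps :: "wt \<Rightarrow> wt \<Rightarrow> complex" where
  "eps \<mu> \<nu> = (\<Prod>i\<in>{1..6}. \<Prod>j\<in>{1..6}. of_int (eps_mat i j ^ nat \<bar>\<mu> i * \<nu> j\<bar>))"

definition tau_idx :: "nat \<Rightarrow> nat" where
  "tau_idx i = (if i = 1 then 6 else if i = 6 then 1 else if i = 3 then 5
                else if i = 5 then 3 else i)"

definition Proj :: "wt \<Rightarrow> nat \<Rightarrow> real" where
  "Proj \<nu> = (\<lambda>i. (of_int (\<nu> i) + of_int (\<nu> (tau_idx i))) / 2)"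

text \<open>F4 fundamental weights omega_1..omega_4 (omega_0 := 0), in lambda coordinates.\<close>
definition F4_weight :: "nat \<Rightarrow> nat \<Rightarrow> real" where
  "F4_weight j = (if j = 1 then (\<lambda>i. if i = 2 then 1 else 0)
     else if j = 2 then (\<lambda>i. if i = 4 then 1 else 0)
     else if j = 3 then (\<lambda>i. if i = 3 \<or> i = 5 then 1/2 else 0)
     else if j = 4 then (\<lambda>i. if i = 1 \<or> i = 6 then 1/2 else 0)
     else (\<lambda>i. 0))"

text \<open>Basis of V_P = S(h^-) (x) C[P]: a monomial in the variables lambda_i(-n)
  (i in 1..6, n >= 1), encoded as a multiset of pairs (i,n), tensored with e^beta.\<close>
type_synonym basis = "(nat \<times> nat) multiset \<times> wt"
type_synonym vec = "basis \<Rightarrow> complex"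

definition valid_basis :: "basis \<Rightarrow> bool" where
  "valid_basis b \<longleftrightarrow> set_mset (fst b) \<subseteq> {1..6} \<times> {1..} \<and> in_P (snd b)"

definition VP :: "vec set" where
  "VP = {f. finite {b. f b \<noteq> 0} \<and> (\<forall>b. f b \<noteq> 0 \<longrightarrow> valid_basis b)}"

definition V_Lambda0 :: "vec set" where
  "V_Lambda0 = {f \<in> VP. \<forall>b. f b \<noteq> 0 \<longrightarrow> in_Q (snd b)}"

definition vac :: vec where
  "vac = (\<lambda>(M, \<beta>). if M = {#} \<and> \<beta> = (\<lambda>_. 0) then 1 else 0)"

text \<open>h(-n), n >= 1 (creation: multiplication by sum_i h_i lambda_i(-n)).\<close>
definition hcre :: "hvec \<Rightarrow> nat \<Rightarrow> vec \<Rightarrow> vec" where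
  "hcre h n f = (\<lambda>(M, \<beta>). \<Sum>i\<in>{1..6}.
      h i * (if (i, n) \<in># M then f (M - {#(i, n)#}, \<beta>) else 0))"

text \<open>h(n), n >= 1 (annihilation: the derivation with h(n) lambda_j(-n) = n <h,lambda_j>).\<close>
definition hann :: "hvec \<Rightarrow> nat \<Rightarrow> vec \<Rightarrow> vec" where
  "hann h n f = (\<lambda>(M, \<beta>). \<Sum>j\<in>{1..6}.
      of_nat n * form_h h (hv (lam j)) * of_nat (count M (j, n) + 1) * f (M + {#(j, n)#}, \<beta>))"

definition hzero :: "hvec \<Rightarrow> vec \<Rightarrow> vec" where
  "hzero h f = (\<lambda>(M, \<beta>). form_h h (hv \<beta>) * f (M, \<beta>))"

definition hmode :: "hvec \<Rightarrow> int \<Rightarrow> vec \<Rightarrow> vec" where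
  "hmode h m = (if m < 0 then hcre h (nat (- m)) else if m = 0 then hzero h else hann h (nat m))"

text \<open>Coefficient of z^p in exp(sum_{k>=1} alpha(-k) z^k / k), defined by the
  recursion p E_p = sum_{k=1}^p alpha(-k) E_{p-k}.\<close>
fun Eminus :: "wt \<Rightarrow> nat \<Rightarrow> vec \<Rightarrow> vec" where
  "Eminus a 0 f = f"
| "Eminus a (Suc p) f = (\<lambda>x. (1 / of_nat (Suc p)) *
      (\<Sum>k\<in>{1..Suc p}. hcre (hv a) k (Eminus a (Suc p - k) f) x))"

text \<open>Coefficient of z^(-q) in exp(- sum_{k>=1} alpha(k) z^(-k) / k).\<close>
fun Eplus :: "wt \<Rightarrow> nat \<Rightarrow> vec \<Rightarrow> vec" where
  "Eplus a 0 f = f"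
| "Eplus a (Suc q) f = (\<lambda>x. (1 / of_nat (Suc q)) *
      (\<Sum>k\<in>{1..Suc q}. hann (- hv a) k (Eplus a (Suc q - k) f) x))"

definition e_op :: "wt \<Rightarrow> vec \<Rightarrow> vec" where
  "e_op a f = (\<lambda>(M, \<gamma>). eps a (\<gamma> - a) * f (M, \<gamma> - a))"

text \<open>The mode {1 (x) e^alpha}_n, i.e. the coefficient of z^(-n-1) in
  E^-(alpha,z) E^+(alpha,z) e_alpha z^(alpha(0)).  On the sector of output e^gamma
  the input sector is beta = gamma - alpha, and the coefficient collects the pairs
  (p,q) with p - q + <alpha,beta> = -n-1.\<close>
definition Y_exp :: "wt \<Rightarrow> int \<Rightarrow> vec \<Rightarrow> vec" where
  "Y_exp a n f = (\<lambda>(M, \<gamma>).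
     infsum (\<lambda>(p, q). Eminus a p (Eplus a q (e_op a f)) (M, \<gamma>))
       {(p, q). real p - real q + form_w a (\<gamma> - a) = - real_of_int (n + 1)})"

text \<open>Normal ordered product :a(m) b(m'): (annihilators h(k), k > 0, to the right).\<close>
definition nord :: "hvec \<Rightarrow> int \<Rightarrow> hvec \<Rightarrow> int \<Rightarrow> vec \<Rightarrow> vec" where
  "nord a m b m' = (if m > 0 \<and> m' \<le> 0 then hmode b m' \<circ> hmode a m
                    else hmode a m \<circ> hmode b m')"

text \<open>The mode {a(-1) b(-1) 1 (x) e^0}_n = sum_m :a(m) b(n-1-m):.\<close>
definition Y_hh :: "hvec \<Rightarrow> hvec \<Rightarrow> int \<Rightarrow> vec \<Rightarrow> vec" where
  "Y_hh a b n f = (\<lambda>x. infsum (\<lambda>m. nord a m b (n - 1 - m) f x) (UNIV :: int set))"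

definition gamma1 :: wt where "gamma1 = alpha 1 - alpha 6"
definition gamma2 :: wt where "gamma2 = alpha 3 - alpha 5"
definition gamma3 :: wt where "gamma3 = gamma1 + gamma2"

definition hx :: hvec where "hx = hv (- lam 1 + lam 6)"
definition hy :: hvec where "hy = hv (lam 3 - lam 5)"
definition hw :: hvec where "hw = hv (lam 1 - lam 3 + lam 5 - lam 6)"

definition Y_exp_pm :: "wt \<Rightarrow> int \<Rightarrow> vec \<Rightarrow> vec" where
  "Y_exp_pm g n f = Y_exp g n f + Y_exp (- g) n f"

text \<open>L(n) = {omega}_{n+1}.\<close>
definition Lop :: "int \<Rightarrow> vec \<Rightarrow> vec" where
  "Lop n f = (\<lambda>x. (1/10) * (Y_hh hx hx (n+1) f x + Y_hh hy hy (n+1) f x + Y_hh hw hw (n+1) f x)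
     + (1/5) * (- Y_exp_pm gamma1 (n+1) f x - Y_exp_pm gamma2 (n+1) f x + Y_exp_pm gamma3 (n+1) f x))"

definition beta_op :: "nat \<Rightarrow> vec \<Rightarrow> vec" where
  "beta_op i f = (if i = 1 then Y_exp (alpha 2) 0 f
     else if i = 2 then Y_exp (alpha 4) 0 f
     else if i = 3 then Y_exp (alpha 3) 0 f + Y_exp (alpha 5) 0 f
     else Y_exp (alpha 1) 0 f + Y_exp (alpha 6) 0 f)"

text \<open>Highest weight vector of type Vir(4/5,h) (x) W^{Omega_j}: conditions (HW1)-(HW5).\<close>
definition is_hw_vector :: "vec \<Rightarrow> complex \<Rightarrow> nat \<Rightarrow> bool" where
  "is_hw_vector v h j \<longleftrightarrow>
     v \<in> VP \<and> v \<noteq> 0 \<and>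
     Y_exp (- theta) 1 v = 0 \<and>
     (\<forall>i\<in>{1..4}. beta_op i v = 0) \<and>
     Lop 1 v = 0 \<and> Lop 2 v = 0 \<and>
     Lop 0 v = (\<lambda>b. h * v b) \<and>
     (\<forall>b. v b \<noteq> 0 \<longrightarrow> Proj (snd b) = F4_weight j)"

end

theory Submission
  imports Defs
begin

text \<open>On \<open>1 \<otimes> e\<^sup>0\<close> all modes \<open>h(n)\<close> with \<open>n \<ge> 0\<close> vanish. Hence \<open>Y(1 \<otimes> e\<^sup>\<alpha>, z)\<close> acts
  on the vacuum as \<open>E\<^sup>-(\<alpha>, z) e\<^sub>\<alpha>\<close>, a power series in \<open>z\<close>, so its modes \<open>{1 \<otimes> e\<^sup>\<alpha>}\<^sub>n\<close>
  with \<open>n \<ge> 0\<close> kill the vacuum; and in each normally ordered term \<open>:a(m) b(n - 1 - m):\<close>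
  with \<open>n \<ge> 1\<close> the factor applied first has a non-negative mode. So the vacuum is killed
  by \<open>L(n)\<close> for all \<open>n \<ge> 0\<close> and by all raising operators of \<open>F\<^sub>4\<^sup>(\<^sup>1\<^sup>)\<close>.\<close>

definition in_group_algebra :: "vec \<Rightarrow> bool" where
  "in_group_algebra f \<longleftrightarrow> (\<forall>M \<beta>. M \<noteq> {#} \<longrightarrow> f (M, \<beta>) = 0)"

definition in_sector :: "wt \<Rightarrow> vec \<Rightarrow> bool" where
  "in_sector \<gamma> f \<longleftrightarrow> (\<forall>M \<beta>. \<beta> \<noteq> \<gamma> \<longrightarrow> f (M, \<beta>) = 0)"

lemma hcre_zero [simp]: "hcre h k 0 = 0"
  unfolding hcre_def zero_fun_def by (simp add: fun_eq_iff)

lemma hann_zero [simp]: "hann h k 0 = 0"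
  unfolding hann_def by (simp add: fun_eq_iff)

lemma hzero_zero [simp]: "hzero h 0 = 0"
  unfolding hzero_def by (simp add: fun_eq_iff)

lemma hmode_zero [simp]: "hmode h m 0 = 0"
  unfolding hmode_def by simp

lemma Eminus_zero [simp]: "Eminus a p 0 = 0"
proof (induction a p "0 :: vec" rule: Eminus.induct)
  case (2 a p)
  then have "hcre (hv a) k (Eminus a (Suc p - k) 0) = 0" if "k \<in> {1..Suc p}" for k
    using that by simp
  then show ?case by (simp add: fun_eq_iff del: sum.cl_ivl_Suc)
qed simp

lemma hann_group_algebra: "in_group_algebra f \<Longrightarrow> hann h k f = 0"
  unfolding in_group_algebra_def hann_def by (simp add: fun_eq_iff)

lemma Eplus_group_algebra:
  "in_group_algebra f \<Longrightarrow> Eplus a q f = (if q = 0 then f else 0)"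
proof (induction a q f rule: Eplus.induct)
  case (2 a q f)
  have "hann (- hv a) k (Eplus a (Suc q - k) f) = 0" if "k \<in> {1..Suc q}" for k
    using 2 that by (simp add: hann_group_algebra)
  then show ?case by (simp add: fun_eq_iff del: sum.cl_ivl_Suc)
qed simp

lemma hcre_in_sector: "in_sector \<gamma> f \<Longrightarrow> in_sector \<gamma> (hcre h k f)"
  unfolding in_sector_def hcre_def by (auto intro!: sum.neutral)

lemma Eminus_in_sector: "in_sector \<gamma> f \<Longrightarrow> in_sector \<gamma> (Eminus a p f)"
proof (induction a p f rule: Eminus.induct)
  case (2 a p f)
  then have "in_sector \<gamma> (hcre (hv a) k (Eminus a (Suc p - k) f))" if "k \<in> {1..Suc p}" for k
    using that by (simp add: hcre_in_sector)
  then show ?case unfolding in_sector_def by (simp del: sum.cl_ivl_Suc)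
qed simp

lemma vac_in_group_algebra: "in_group_algebra vac"
  unfolding in_group_algebra_def vac_def by simp

lemma e_op_vac_in_group_algebra: "in_group_algebra (e_op a vac)"
  unfolding in_group_algebra_def e_op_def vac_def by simp

lemma e_op_vac_in_sector: "in_sector a (e_op a vac)"
  unfolding in_sector_def e_op_def vac_def by (auto simp: fun_eq_iff)

lemma Y_exp_vac:
  assumes "n \<ge> 0"
  shows "Y_exp a n vac = 0"
proof -
  have term_vanishes: "Eminus a p (Eplus a q (e_op a vac)) (M, \<gamma>) = 0"
    if pq: "real p - real q + form_w a (\<gamma> - a) = - real_of_int (n + 1)" for p q M \<gamma>
  proof (cases "q = 0 \<and> \<gamma> = a")
    case True
    then have "real p = - real_of_int (n + 1)"
      using pq by (simp add: form_w_def)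
    with assms show ?thesis by linarith
  next
    case False
    moreover have "in_sector a (Eminus a p (e_op a vac))"
      by (rule Eminus_in_sector[OF e_op_vac_in_sector])
    ultimately show ?thesis
      by (auto simp: Eplus_group_algebra[OF e_op_vac_in_group_algebra] in_sector_def)
  qed
  show ?thesis
    unfolding Y_exp_def by (auto simp: fun_eq_iff term_vanishes intro!: infsum_0)
qed

lemma hzero_vac: "hzero h vac = 0"
  unfolding hzero_def vac_def hv_def form_h_def by (simp add: fun_eq_iff)

lemma hmode_vac: "m \<ge> 0 \<Longrightarrow> hmode h m vac = 0"
  unfolding hmode_def by (simp add: hzero_vac hann_group_algebra[OF vac_in_group_algebra])

lemma nord_vac: "n \<ge> 1 \<Longrightarrow> nord a m b (n - 1 - m) vac = 0"
  unfolding nord_def by (cases "m > 0") (simp_all add: hmode_vac)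

lemma Y_hh_vac: "n \<ge> 1 \<Longrightarrow> Y_hh a b n vac = 0"
  unfolding Y_hh_def by (simp add: nord_vac fun_eq_iff)

lemma Lop_vac: "n \<ge> 0 \<Longrightarrow> Lop n vac = 0"
  unfolding Lop_def Y_exp_pm_def by (simp add: Y_hh_vac Y_exp_vac fun_eq_iff)

lemma vac_support: "vac b \<noteq> 0 \<longleftrightarrow> b = ({#}, \<lambda>_. 0)"
  by (cases b) (simp add: vac_def)

lemma vac_in_VP: "vac \<in> VP"
  unfolding VP_def valid_basis_def in_P_def by (simp add: vac_support)

theorem lemma6p1:
  shows "vac \<in> V_Lambda0 \<and> is_hw_vector vac 0 0"
proof -
  have "in_Q (\<lambda>_. 0)"
    unfolding in_Q_def by (rule exI[of _ "\<lambda>_. 0"]) simp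
  moreover have "vac \<noteq> 0"
    using vac_support[of "({#}, \<lambda>_. 0)"] by auto
  moreover have "Proj (\<lambda>_. 0) = F4_weight 0"
    unfolding Proj_def F4_weight_def by (simp add: fun_eq_iff)
  ultimately show ?thesis
    unfolding V_Lambda0_def is_hw_vector_def beta_op_def
    by (auto simp: vac_in_VP vac_support Y_exp_vac Lop_vac)
qed

end
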